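(* Let $\mathbf{X}$ be a zero-mean weakly stationary process with absolutely summable autocovariance and power spectral density $S_{xx}$, with $S_{xx}(\nu)>0$ for almost every $\nu\in\mathcal{I}$. Let $\mathbf{h}$ be a BIBO-stable impulse response ($\|\mathbf{h}\|_1<\infty$) whose transfer function $\widehat{h}$ satisfies $\widehat{h}(\nu)\neq 0$ for almost every $\nu$, with $1/|\widehat{h}|^2\in L^1(\mathcal{I})$, and such that $|\widehat{h}|$ is not (almost everywhere) constant. Let $\mathbf{Y}=\mathbf{h}*\mathbf{X}$, so that $S_{yy}=|\widehat{h}|^2S_{xx}$. Then $$\rho_{\mathbf{X}\to\mathbf{Y}}\,\rho_{\mathbf{Y}\to\mathbf{X}}<1 .$$ Moreover, if there exists $\alpha>0$ such that $|\widehat{h}(\nu)|^2\le (2-\alpha)\|\mathbf{h}\|_2^2$ for all $\nu\in\mathcal{I}$, then $$\rho_{\mathbf{X}\to\mathbf{Y}}\,\rho_{\mathbf{Y}\to\mathbf{X}}\le \left[1+\alpha\int_{\mathcal{I}}\left(\frac{|\widehat{h}(\nu)|^2-\|\mathbf{h}\|_2^2}{\|\mathbf{h}\|_2^2}\right)^2 d\nu\right]^{-1}<1 .$$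
   Context: $\mathcal{I}=[-1/2,1/2]$ and $\langle f\rangle=\int_{\mathcal{I}}f(\nu)\,d\nu$. For a sequence $\mathbf{a}=\{a_t\}_{t\in\mathbb{Z}}$, $\widehat{a}(\nu)=\sum_t a_t e^{-\mathbf{i}2\pi\nu t}$, $\|\mathbf{a}\|_2^2=\sum_t|a_t|^2$. The filter output is $\mathbf{Y}=\mathbf{h}*\mathbf{X}$, i.e. $Y_t=\sum_{\tau\in\mathbb{Z}}X_{t-\tau}h_\tau$. For a zero-mean weakly stationary process with autocovariance $C_{xx}(\tau)=\mathbb{E}[X_tX_{t+\tau}]$ (absolutely summable), the power spectral density is $S_{xx}=\widehat{C_{xx}}$. The spectral dependency ratios are $$\rho_{\mathbf{X}\to\mathbf{Y}}=\frac{\langle S_{yy}\rangle}{\langle S_{xx}\rangle\,\langle S_{yy}/S_{xx}\rangle},\qquad \rho_{\mathbf{Y}\to\mathbf{X}}=\frac{\langle S_{xx}\rangle}{\langle S_{yy}\rangle\,\langle S_{xx}/S_{yy}\rangle}.$$ *)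

theory Defs
  imports "HOL-Probability.Probability"
begin

definition freqI :: "real set" where
  "freqI = {-1/2..1/2}"

definition avgI :: "(real \<Rightarrow> real) \<Rightarrow> real" where
  "avgI f = (LBINT \<nu>:freqI. f \<nu>)"

definition dtft :: "(int \<Rightarrow> real) \<Rightarrow> real \<Rightarrow> complex" where
  "dtft a \<nu> = (\<Sum>\<^sub>\<infinity>t. complex_of_real (a t) * cis (- 2 * pi * \<nu> * of_int t))"

definition l2sq :: "(int \<Rightarrow> real) \<Rightarrow> real" where
  "l2sq a = (\<Sum>\<^sub>\<infinity>t. (a t)\<^sup>2)"

definition zero_mean_weakly_stationary ::
  "'a measure \<Rightarrow> (int \<Rightarrow> 'a \<Rightarrow> real) \<Rightarrow> (int \<Rightarrow> real) \<Rightarrow> bool" where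
  "zero_mean_weakly_stationary M X C \<longleftrightarrow>
     prob_space M \<and>
     (\<forall>t. X t \<in> borel_measurable M) \<and>
     (\<forall>t. integrable M (\<lambda>\<omega>. (X t \<omega>)\<^sup>2)) \<and>
     (\<forall>t. (\<integral>\<omega>. X t \<omega> \<partial>M) = 0) \<and>
     (\<forall>t \<tau>. (\<integral>\<omega>. X t \<omega> * X (t + \<tau>) \<omega> \<partial>M) = C \<tau>)"

text \<open>Power spectral density: S = Fourier transform of the autocovariance
  (real-valued since C is even; we take the real part).\<close>
definition psd :: "(int \<Rightarrow> real) \<Rightarrow> real \<Rightarrow> real" where
  "psd C \<nu> = Re (dtft C \<nu>)"

definition rho_XY :: "(real \<Rightarrow> real) \<Rightarrow> (real \<Rightarrow> real) \<Rightarrow> real" where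
  "rho_XY Sxx Syy = avgI Syy / (avgI Sxx * avgI (\<lambda>\<nu>. Syy \<nu> / Sxx \<nu>))"

definition rho_YX :: "(real \<Rightarrow> real) \<Rightarrow> (real \<Rightarrow> real) \<Rightarrow> real" where
  "rho_YX Sxx Syy = avgI Sxx / (avgI Syy * avgI (\<lambda>\<nu>. Sxx \<nu> / Syy \<nu>))"

end

theory Submission
  imports Defs
begin

text \<open>
  Writing \<open>g = |dtft h|\<^sup>2\<close>, we have \<open>S\<^sub>y\<^sub>y / S\<^sub>x\<^sub>x = g\<close>, so the input spectrum cancels from the
  product of the two dependency ratios, which equals \<open>1 / (\<langle>g\<rangle> \<langle>1/g\<rangle>)\<close>. With \<open>c = \<langle>g\<rangle>\<close> one has the exact identity
  \<open>\<langle>g\<rangle> \<langle>1/g\<rangle> = 1 + \<langle>(g - c)\<^sup>2/g\<rangle> / c\<close>, whose last term is positive unless \<open>g\<close> is a.e. constant.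
  If moreover \<open>g \<le> (2 - \<alpha>) c\<close>, then \<open>(g - c)\<^sup>2/(g c) \<ge> ((g - c)/c)\<^sup>2 / (2 - \<alpha>)\<close> and
  \<open>1/(2 - \<alpha>) \<ge> \<alpha>\<close>; Parseval's identity \<open>c = \<parallel>h\<parallel>\<^sub>2\<^sup>2\<close> turns this into the stated bound.
\<close>

definition dtft_partial :: "(int \<Rightarrow> real) \<Rightarrow> int set \<Rightarrow> real \<Rightarrow> complex" where
  "dtft_partial a F \<nu> = (\<Sum>t\<in>F. complex_of_real (a t) * cis (- 2 * pi * \<nu> * of_int t))"

lemma uniform_limit_dtft_partial:
  assumes "(\<lambda>t. \<bar>a t\<bar>) summable_on UNIV"
  shows "uniform_limit UNIV (dtft_partial a) (dtft a) (finite_subsets_at_top UNIV)"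
  unfolding dtft_partial_def dtft_def[abs_def]
  by (rule Weierstrass_m_test_general[where M="\<lambda>t. \<bar>a t\<bar>"]) (auto simp: norm_mult assms)

lemma continuous_on_dtft_partial: "continuous_on UNIV (dtft_partial a F)"
  unfolding dtft_partial_def by (intro continuous_intros)

lemma continuous_on_dtft:
  assumes "(\<lambda>t. \<bar>a t\<bar>) summable_on UNIV"
  shows "continuous_on UNIV (dtft a)"
  by (rule uniform_limit_theorem[OF _ uniform_limit_dtft_partial[OF assms]])
     (auto simp: continuous_on_dtft_partial finite_subsets_at_top_neq_bot)

lemma norm_dtft_le:
  assumes "(\<lambda>t. \<bar>a t\<bar>) summable_on UNIV"
  shows "norm (dtft a \<nu>) \<le> (\<Sum>\<^sub>\<infinity>t. \<bar>a t\<bar>)"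
  unfolding dtft_def
proof (rule norm_infsum_le[OF has_sum_infsum has_sum_infsum[OF assms]])
  show "(\<lambda>t. complex_of_real (a t) * cis (- 2 * pi * \<nu> * of_int t)) summable_on UNIV"
    by (rule abs_summable_summable) (simp add: norm_mult assms)
qed (simp add: norm_mult)

lemma has_integral_cos_int_freq:
  "((\<lambda>\<nu>. cos (2 * pi * \<nu> * of_int k)) has_integral (if k = 0 then 1 else 0)) {-1/2..1/2::real}"
proof (cases "k = 0")
  case True
  then show ?thesis using has_integral_const_real[of "1::real" "-1/2" "1/2"] by simp
next
  case False
  let ?F = "\<lambda>\<nu>. sin (2 * pi * \<nu> * of_int k) / (2 * pi * of_int k)"
  have "((\<lambda>\<nu>. cos (2 * pi * \<nu> * of_int k)) has_integral ?F (1/2) - ?F (-1/2)) {-1/2..1/2}"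
  proof (rule fundamental_theorem_of_calculus)
    fix x :: real
    have "(?F has_real_derivative cos (2 * pi * x * of_int k) * (2 * pi * of_int k) / (2 * pi * of_int k))
        (at x within {-1/2..1/2})"
      by (auto intro!: derivative_eq_intros)
    then show "(?F has_vector_derivative cos (2 * pi * x * of_int k)) (at x within {-1/2..1/2})"
      using False by (simp add: has_real_derivative_iff_has_vector_derivative)
  qed simp
  moreover have "sin (2 * pi * (1/2) * of_int k) = 0" "sin (2 * pi * (-1/2) * of_int k) = 0"
    by (auto simp: sin_zero_iff_int2 intro: exI[of _ k] exI[of _ "-k"])
  ultimately show ?thesis using False by simp
qed

lemma norm_dtft_partial_squared:
  "(cmod (dtft_partial a F \<nu>))\<^sup>2 = (\<Sum>s\<in>F. \<Sum>t\<in>F. a s * a t * cos (2 * pi * \<nu> * of_int (t - s)))"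
proof -
  have "complex_of_real ((cmod (dtft_partial a F \<nu>))\<^sup>2) = dtft_partial a F \<nu> * cnj (dtft_partial a F \<nu>)"
    by (rule complex_norm_square)
  also have "\<dots> = (\<Sum>s\<in>F. \<Sum>t\<in>F. complex_of_real (a s * a t) * cis (2 * pi * \<nu> * of_int (t - s)))"
    unfolding dtft_partial_def cnj_sum sum_product
    by (intro sum.cong refl) (simp add: cis_cnj cis_mult algebra_simps)
  finally have "(cmod (dtft_partial a F \<nu>))\<^sup>2
      = Re (\<Sum>s\<in>F. \<Sum>t\<in>F. complex_of_real (a s * a t) * cis (2 * pi * \<nu> * of_int (t - s)))"
    by (metis Re_complex_of_real)
  then show ?thesis by (simp add: Re_sum)
qed

lemma has_integral_norm_dtft_partial_squared:
  assumes "finite F"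
  shows "((\<lambda>\<nu>. (cmod (dtft_partial a F \<nu>))\<^sup>2) has_integral (\<Sum>t\<in>F. (a t)\<^sup>2)) {-1/2..1/2}"
proof -
  have "((\<lambda>\<nu>. \<Sum>s\<in>F. \<Sum>t\<in>F. a s * a t * cos (2 * pi * \<nu> * of_int (t - s))) has_integral
        (\<Sum>s\<in>F. \<Sum>t\<in>F. a s * a t * (if t - s = 0 then 1 else 0))) {-1/2..1/2}"
    by (intro has_integral_sum assms has_integral_mult_right has_integral_cos_int_freq)
  also have "(\<Sum>s\<in>F. \<Sum>t\<in>F. a s * a t * (if t - s = 0 then 1 else 0)) = (\<Sum>s\<in>F. (a s)\<^sup>2)"
    using assms by (simp add: if_distrib sum.delta power2_eq_square cong: if_cong)
  finally show ?thesis by (simp add: norm_dtft_partial_squared)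
qed

lemma summable_on_square_of_abs_summable:
  fixes a :: "'a \<Rightarrow> real"
  assumes summable: "(\<lambda>t. \<bar>a t\<bar>) summable_on UNIV"
  shows "(\<lambda>t. (a t)\<^sup>2) summable_on UNIV"
proof (rule summable_on_comparison_test)
  let ?B = "\<Sum>\<^sub>\<infinity>t. \<bar>a t\<bar>"
  show "(\<lambda>t. ?B * \<bar>a t\<bar>) summable_on UNIV" by (intro summable_on_cmult_right summable)
  fix t :: 'a
  have "\<bar>a t\<bar> = infsum (\<lambda>t. \<bar>a t\<bar>) {t}" by simp
  also have "\<dots> \<le> ?B" by (rule infsum_mono_neutral) (auto simp: summable)
  finally show "(a t)\<^sup>2 \<le> ?B * \<bar>a t\<bar>"
    by (simp add: power2_eq_square) (metis abs_ge_zero abs_mult_self_eq mult_right_mono)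
qed simp

text \<open>Parseval's identity, proved by integrating the uniformly convergent net of squared
  partial sums, whose integrals are the partial sums of \<open>\<Sum> a\<^sub>t\<^sup>2\<close> by orthogonality.\<close>

lemma parseval_dtft:
  assumes summable: "(\<lambda>t. \<bar>a t\<bar>) summable_on UNIV"
  shows "(LBINT \<nu>:freqI. (cmod (dtft a \<nu>))\<^sup>2) = l2sq a"
proof -
  let ?S = "cbox (-1/2) (1/2::real)"
  have bounded: "bounded ((\<lambda>\<nu>. cmod (dtft a \<nu>)) ` S)" for S
    unfolding bounded_iff using norm_dtft_le[OF summable] by auto
  have "uniform_limit ?S (\<lambda>F \<nu>. cmod (dtft_partial a F \<nu>)) (\<lambda>\<nu>. cmod (dtft a \<nu>))
      (finite_subsets_at_top UNIV)"
    by (intro uniform_limit_norm uniform_limit_on_subset[OF uniform_limit_dtft_partial[OF summable]]) auto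
  then have uniform: "uniform_limit ?S (\<lambda>F \<nu>. cmod (dtft_partial a F \<nu>) * cmod (dtft_partial a F \<nu>))
      (\<lambda>\<nu>. cmod (dtft a \<nu>) * cmod (dtft a \<nu>)) (finite_subsets_at_top UNIV)"
    by (intro uniform_lim_mult bounded)
  have "continuous_on ?S (\<lambda>\<nu>. cmod (dtft_partial a F \<nu>) * cmod (dtft_partial a F \<nu>))" for F
    by (intro continuous_intros continuous_on_subset[OF continuous_on_dtft_partial]) auto
  then obtain I J
    where I: "\<And>F. ((\<lambda>\<nu>. cmod (dtft_partial a F \<nu>) * cmod (dtft_partial a F \<nu>)) has_integral I F) ?S"
      and J: "((\<lambda>\<nu>. cmod (dtft a \<nu>) * cmod (dtft a \<nu>)) has_integral J) ?S"
      and I_J: "(I \<longlongrightarrow> J) (finite_subsets_at_top UNIV)"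
    using uniform_limit_integral_cbox[OF uniform _ finite_subsets_at_top_neq_bot] by blast
  have "(\<Sum>t\<in>F. (a t)\<^sup>2) = I F" if "finite F" for F
    using has_integral_unique[OF I[of F]] has_integral_norm_dtft_partial_squared[OF that, of a]
    by (simp add: power2_eq_square)
  then have "\<forall>\<^sub>F F in finite_subsets_at_top UNIV. (\<Sum>t\<in>F. (a t)\<^sup>2) = I F"
    by (intro eventually_finite_subsets_at_top_weakI)
  moreover have "((\<lambda>F. \<Sum>t\<in>F. (a t)\<^sup>2) \<longlongrightarrow> l2sq a) (finite_subsets_at_top UNIV)"
    using has_sum_infsum[OF summable_on_square_of_abs_summable[OF summable]]
    unfolding l2sq_def has_sum_def .
  ultimately have "J = l2sq a"
    using I_J by (metis Lim_transform_eventually finite_subsets_at_top_neq_bot tendsto_unique)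
  have "continuous_on {-1/2..1/2} (\<lambda>\<nu>. (cmod (dtft a \<nu>))\<^sup>2)"
    by (intro continuous_intros continuous_on_subset[OF continuous_on_dtft[OF summable]]) auto
  then have "(LBINT \<nu>:freqI. (cmod (dtft a \<nu>))\<^sup>2) = integral {-1/2..1/2} (\<lambda>\<nu>. (cmod (dtft a \<nu>))\<^sup>2)"
    unfolding freqI_def by (rule set_borel_integral_eq_integral(2)[OF borel_integrable_atLeastAtMost'])
  also have "\<dots> = J" using J by (simp add: power2_eq_square integral_unique)
  finally show ?thesis using \<open>J = l2sq a\<close> by simp
qed

lemma set_integrable_freqI_continuous:
  fixes f :: "real \<Rightarrow> real"
  assumes "continuous_on UNIV f"
  shows "set_integrable lborel freqI f"
  unfolding freqI_def
  by (rule borel_integrable_atLeastAtMost') (rule continuous_on_subset[OF assms], auto)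

lemma avgI_const [simp]: "avgI (\<lambda>_. k) = k"
  unfolding avgI_def freqI_def by (subst set_integral_const) auto

lemma avgI_nonneg:
  assumes "set_integrable lborel freqI f" "AE \<nu> in lborel. \<nu> \<in> freqI \<longrightarrow> f \<nu> \<ge> 0"
  shows "avgI f \<ge> 0"
  using assms unfolding avgI_def set_integrable_def set_lebesgue_integral_def
  by (intro integral_nonneg_AE) (auto elim!: eventually_mono simp: indicator_def)

lemma AE_eq_0_of_avgI_eq_0:
  assumes "set_integrable lborel freqI f" "AE \<nu> in lborel. \<nu> \<in> freqI \<longrightarrow> f \<nu> \<ge> 0"
    and "avgI f = 0"
  shows "AE \<nu> in lborel. \<nu> \<in> freqI \<longrightarrow> f \<nu> = 0"
proof -
  have "AE \<nu> in lborel. indicator freqI \<nu> *\<^sub>R f \<nu> = 0"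
    using assms unfolding avgI_def set_integrable_def set_lebesgue_integral_def
    by (subst integral_nonneg_eq_0_iff_AE[symmetric]) (auto elim!: eventually_mono simp: indicator_def)
  then show ?thesis by (auto elim!: eventually_mono simp: indicator_def)
qed

lemma avgI_pos_of_not_AE_zero:
  assumes "set_integrable lborel freqI f" "AE \<nu> in lborel. \<nu> \<in> freqI \<longrightarrow> f \<nu> \<ge> 0"
    and "\<not> (AE \<nu> in lborel. \<nu> \<in> freqI \<longrightarrow> f \<nu> = 0)"
  shows "avgI f > 0"
  using avgI_nonneg[OF assms(1,2)] AE_eq_0_of_avgI_eq_0[OF assms(1,2)] assms(3)
  by fastforce

lemma not_AE_notin_freqI: "\<not> (AE \<nu> in lborel. \<nu> \<notin> freqI)"
proof
  assume "AE \<nu> in lborel. \<nu> \<notin> freqI"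
  then have "emeasure lborel freqI = 0"
    by (subst (asm) AE_iff_measurable[of freqI]) (auto simp: freqI_def)
  then show False unfolding freqI_def by simp
qed

lemma avgI_pos:
  assumes "set_integrable lborel freqI f" "AE \<nu> in lborel. \<nu> \<in> freqI \<longrightarrow> f \<nu> > 0"
  shows "avgI f > 0"
proof (rule avgI_pos_of_not_AE_zero[OF assms(1)])
  show "AE \<nu> in lborel. \<nu> \<in> freqI \<longrightarrow> f \<nu> \<ge> 0"
    using assms(2) by (auto elim!: eventually_mono)
  show "\<not> (AE \<nu> in lborel. \<nu> \<in> freqI \<longrightarrow> f \<nu> = 0)"
  proof
    assume "AE \<nu> in lborel. \<nu> \<in> freqI \<longrightarrow> f \<nu> = 0"
    with assms(2) have "AE \<nu> in lborel. \<nu> \<notin> freqI" by eventually_elim auto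
    then show False using not_AE_notin_freqI by blast
  qed
qed

lemma avgI_cong_AE:
  assumes "f \<in> borel_measurable borel" "g \<in> borel_measurable borel"
    and "AE \<nu> in lborel. \<nu> \<in> freqI \<longrightarrow> f \<nu> = (g \<nu> :: real)"
  shows "avgI f = avgI g"
  unfolding avgI_def using assms
  by (intro set_lebesgue_integral_cong_AE) (auto simp: freqI_def)

lemma rho_XY_mult_rho_YX_filtered:
  fixes g s :: "real \<Rightarrow> real"
  assumes g_cont: "continuous_on UNIV g" and s_cont: "continuous_on UNIV s"
    and g_pos: "AE \<nu> in lborel. \<nu> \<in> freqI \<longrightarrow> g \<nu> > 0"
    and s_pos: "AE \<nu> in lborel. \<nu> \<in> freqI \<longrightarrow> s \<nu> > 0"
  shows "rho_XY s (\<lambda>\<nu>. g \<nu> * s \<nu>) * rho_YX s (\<lambda>\<nu>. g \<nu> * s \<nu>)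
    = 1 / (avgI g * avgI (\<lambda>\<nu>. 1 / g \<nu>))"
proof -
  have [measurable]: "g \<in> borel_measurable borel" "s \<in> borel_measurable borel"
    using g_cont s_cont by (auto intro: borel_measurable_continuous_onI)
  have "avgI s > 0"
    by (rule avgI_pos[OF set_integrable_freqI_continuous[OF s_cont] s_pos])
  moreover have "avgI (\<lambda>\<nu>. g \<nu> * s \<nu>) > 0"
    using g_pos s_pos
    by (intro avgI_pos set_integrable_freqI_continuous continuous_intros g_cont s_cont)
       (auto elim: eventually_rev_mp)
  moreover have "avgI (\<lambda>\<nu>. g \<nu> * s \<nu> / s \<nu>) = avgI g"
    using s_pos by (intro avgI_cong_AE) (auto elim!: eventually_mono)
  moreover have "avgI (\<lambda>\<nu>. s \<nu> / (g \<nu> * s \<nu>)) = avgI (\<lambda>\<nu>. 1 / g \<nu>)"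
    using s_pos by (intro avgI_cong_AE) (auto elim!: eventually_mono)
  ultimately show ?thesis
    unfolding rho_XY_def rho_YX_def by (simp add: field_simps)
qed

context
  fixes g :: "real \<Rightarrow> real"
  assumes g_cont: "continuous_on UNIV g"
    and g_pos: "AE \<nu> in lborel. \<nu> \<in> freqI \<longrightarrow> g \<nu> > 0"
    and inverse_integrable: "set_integrable lborel freqI (\<lambda>\<nu>. 1 / g \<nu>)"
begin

lemma deviation_ratio_eq_AE:
  "AE \<nu> in lborel. \<nu> \<in> freqI \<longrightarrow> (g \<nu> - c)\<^sup>2 / g \<nu> = g \<nu> - 2 * c + c\<^sup>2 * (1 / g \<nu>)"
  using g_pos by eventually_elim (auto simp: field_simps power2_eq_square)

lemma set_integrable_deviation_ratio:
  "set_integrable lborel freqI (\<lambda>\<nu>. (g \<nu> - c)\<^sup>2 / g \<nu>)"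
proof -
  have [measurable]: "g \<in> borel_measurable borel"
    using g_cont by (rule borel_measurable_continuous_onI)
  have "set_integrable lborel freqI (\<lambda>\<nu>. g \<nu> - 2 * c)"
    by (intro set_integrable_freqI_continuous continuous_intros g_cont)
  then have "set_integrable lborel freqI (\<lambda>\<nu>. g \<nu> - 2 * c + c\<^sup>2 * (1 / g \<nu>))"
    using set_integrable_mult_right[OF inverse_integrable] by (rule set_integral_add)
  then show ?thesis
    using deviation_ratio_eq_AE
    by (subst set_integrable_cong_AE) (auto simp: freqI_def elim!: eventually_mono)
qed

lemma avgI_weight_pos: "avgI g > 0"
  by (rule avgI_pos[OF set_integrable_freqI_continuous[OF g_cont] g_pos])

lemma avgI_mult_avgI_inverse:
  "avgI g * avgI (\<lambda>\<nu>. 1 / g \<nu>) = 1 + avgI (\<lambda>\<nu>. (g \<nu> - avgI g)\<^sup>2 / g \<nu>) / avgI g"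
proof -
  define c where "c = avgI g"
  have [measurable]: "g \<in> borel_measurable borel"
    using g_cont by (rule borel_measurable_continuous_onI)
  have g_int: "set_integrable lborel freqI g"
    by (rule set_integrable_freqI_continuous[OF g_cont])
  have const_int: "set_integrable lborel freqI (\<lambda>_. 2 * c)"
    by (rule set_integrable_freqI_continuous) simp
  have "avgI (\<lambda>\<nu>. (g \<nu> - c)\<^sup>2 / g \<nu>) = avgI (\<lambda>\<nu>. g \<nu> - 2 * c + c\<^sup>2 * (1 / g \<nu>))"
    using deviation_ratio_eq_AE by (rule avgI_cong_AE[rotated 2]) auto
  also have "\<dots> = avgI (\<lambda>\<nu>. g \<nu> - 2 * c) + avgI (\<lambda>\<nu>. c\<^sup>2 * (1 / g \<nu>))"
    unfolding avgI_def
    by (rule set_integral_add(2)[OF set_integral_diff(1)[OF g_int const_int]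
          set_integrable_mult_right[OF inverse_integrable]])
  also have "\<dots> = avgI g - avgI (\<lambda>_. 2 * c) + c\<^sup>2 * avgI (\<lambda>\<nu>. 1 / g \<nu>)"
    unfolding avgI_def by (simp only: set_integral_diff(2)[OF g_int const_int] set_integral_mult_right)
  finally have "avgI (\<lambda>\<nu>. (g \<nu> - c)\<^sup>2 / g \<nu>) = c\<^sup>2 * avgI (\<lambda>\<nu>. 1 / g \<nu>) - c"
    by (simp add: c_def)
  then show ?thesis
    using avgI_weight_pos unfolding c_def[symmetric] by (simp add: field_simps power2_eq_square)
qed

lemma avgI_mult_avgI_inverse_gt_1:
  assumes nonconst: "\<not> (AE \<nu> in lborel. \<nu> \<in> freqI \<longrightarrow> g \<nu> = avgI g)"
  shows "1 < avgI g * avgI (\<lambda>\<nu>. 1 / g \<nu>)"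
proof -
  have "avgI (\<lambda>\<nu>. (g \<nu> - avgI g)\<^sup>2 / g \<nu>) > 0"
  proof (rule avgI_pos_of_not_AE_zero[OF set_integrable_deviation_ratio])
    show "AE \<nu> in lborel. \<nu> \<in> freqI \<longrightarrow> (g \<nu> - avgI g)\<^sup>2 / g \<nu> \<ge> 0"
      using g_pos by eventually_elim auto
    show "\<not> (AE \<nu> in lborel. \<nu> \<in> freqI \<longrightarrow> (g \<nu> - avgI g)\<^sup>2 / g \<nu> = 0)"
    proof
      assume "AE \<nu> in lborel. \<nu> \<in> freqI \<longrightarrow> (g \<nu> - avgI g)\<^sup>2 / g \<nu> = 0"
      with g_pos have "AE \<nu> in lborel. \<nu> \<in> freqI \<longrightarrow> g \<nu> = avgI g" by eventually_elim auto
      with nonconst show False by blast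
    qed
  qed
  then show ?thesis using avgI_mult_avgI_inverse avgI_weight_pos by simp
qed

lemma avgI_relative_deviation_pos:
  assumes nonconst: "\<not> (AE \<nu> in lborel. \<nu> \<in> freqI \<longrightarrow> g \<nu> = avgI g)"
  shows "avgI (\<lambda>\<nu>. ((g \<nu> - avgI g) / avgI g)\<^sup>2) > 0"
proof (rule avgI_pos_of_not_AE_zero)
  show "set_integrable lborel freqI (\<lambda>\<nu>. ((g \<nu> - avgI g) / avgI g)\<^sup>2)"
    using avgI_weight_pos by (intro set_integrable_freqI_continuous continuous_intros g_cont) auto
  show "\<not> (AE \<nu> in lborel. \<nu> \<in> freqI \<longrightarrow> ((g \<nu> - avgI g) / avgI g)\<^sup>2 = 0)"
    using nonconst avgI_weight_pos by simp
qed simp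

lemma avgI_mult_avgI_inverse_ge:
  assumes "\<alpha> > 0" and bounded: "\<forall>\<nu>\<in>freqI. g \<nu> \<le> (2 - \<alpha>) * avgI g"
  shows "1 + \<alpha> * avgI (\<lambda>\<nu>. ((g \<nu> - avgI g) / avgI g)\<^sup>2) \<le> avgI g * avgI (\<lambda>\<nu>. 1 / g \<nu>)"
proof -
  define c where "c = avgI g"
  define D where "D = (\<lambda>\<nu>. ((g \<nu> - c) / c)\<^sup>2)"
  define J where "J = avgI D"
  have c_pos: "c > 0" unfolding c_def by (rule avgI_weight_pos)
  have D_int: "set_integrable lborel freqI D"
    unfolding D_def using c_pos by (intro set_integrable_freqI_continuous continuous_intros g_cont) auto
  have "\<alpha> < 2"
  proof (rule ccontr)
    assume "\<not> \<alpha> < 2"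
    then have "\<forall>\<nu>\<in>freqI. g \<nu> \<le> 0"
      using bounded c_pos unfolding c_def by (meson mult_nonpos_nonneg order.trans less_imp_le not_less diff_le_0_iff_le)
    with g_pos have "AE \<nu> in lborel. \<nu> \<notin> freqI" by (force elim!: eventually_mono)
    then show False using not_AE_notin_freqI by blast
  qed
  have pointwise: "AE \<nu> \<in> freqI in lborel. c / (2 - \<alpha>) * D \<nu> \<le> (g \<nu> - c)\<^sup>2 / g \<nu>"
    using g_pos
  proof eventually_elim
    case (elim \<nu>)
    show ?case
    proof
      assume "\<nu> \<in> freqI"
      then have "0 < g \<nu>" "g \<nu> \<le> (2 - \<alpha>) * c" using elim bounded by (auto simp: c_def)
      have "c / (2 - \<alpha>) * ((g \<nu> - c) / c)\<^sup>2 = (g \<nu> - c)\<^sup>2 / ((2 - \<alpha>) * c)"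
        using c_pos by (simp add: power2_eq_square)
      also have "\<dots> \<le> (g \<nu> - c)\<^sup>2 / g \<nu>"
        using \<open>0 < g \<nu>\<close> \<open>g \<nu> \<le> (2 - \<alpha>) * c\<close> by (intro divide_left_mono) auto
      finally show "c / (2 - \<alpha>) * D \<nu> \<le> (g \<nu> - c)\<^sup>2 / g \<nu>" unfolding D_def .
    qed
  qed
  have "c / (2 - \<alpha>) * J \<le> avgI (\<lambda>\<nu>. (g \<nu> - c)\<^sup>2 / g \<nu>)"
    unfolding J_def avgI_def
    using set_integral_mono_AE[OF set_integrable_mult_right[OF D_int] set_integrable_deviation_ratio pointwise]
    by simp
  then have "J / (2 - \<alpha>) \<le> avgI (\<lambda>\<nu>. (g \<nu> - c)\<^sup>2 / g \<nu>) / c"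
    using c_pos by (simp add: field_simps)
  moreover have "\<alpha> * J \<le> J / (2 - \<alpha>)"
  proof -
    have "\<alpha> * (2 - \<alpha>) \<le> 1"
      using zero_le_power2[of "\<alpha> - 1"] by (simp add: power2_eq_square algebra_simps)
    moreover have "J \<ge> 0"
      unfolding J_def by (rule avgI_nonneg[OF D_int]) (simp add: D_def)
    ultimately have "\<alpha> * (2 - \<alpha>) * J \<le> J"
      using mult_right_mono by fastforce
    then show ?thesis using \<open>\<alpha> < 2\<close> by (simp add: field_simps)
  qed
  ultimately have "\<alpha> * J \<le> avgI (\<lambda>\<nu>. (g \<nu> - c)\<^sup>2 / g \<nu>) / c" by linarith
  then show ?thesis
    unfolding avgI_mult_avgI_inverse J_def D_def c_def by simp
qed

end

theorem mainTheorem1: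
  fixes M :: "'a measure" and X :: "int \<Rightarrow> 'a \<Rightarrow> real"
    and C :: "int \<Rightarrow> real" and h :: "int \<Rightarrow> real"
  assumes X_ws: "zero_mean_weakly_stationary M X C"
    and C_abs: "(\<lambda>\<tau>. \<bar>C \<tau>\<bar>) summable_on UNIV"
    and Sxx_pos: "AE \<nu> in lborel. \<nu> \<in> freqI \<longrightarrow> psd C \<nu> > 0"
    and h_bibo: "(\<lambda>t. \<bar>h t\<bar>) summable_on UNIV"
    and h_nz: "AE \<nu> in lborel. \<nu> \<in> freqI \<longrightarrow> dtft h \<nu> \<noteq> 0"
    and h_inv_L1: "set_integrable lborel freqI (\<lambda>\<nu>. 1 / (cmod (dtft h \<nu>))\<^sup>2)"
    and h_nonconst: "\<not> (\<exists>c. AE \<nu> in lborel. \<nu> \<in> freqI \<longrightarrow> cmod (dtft h \<nu>) = c)"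
  defines "Sxx \<equiv> psd C"
    and "Syy \<equiv> (\<lambda>\<nu>. (cmod (dtft h \<nu>))\<^sup>2 * psd C \<nu>)"
  shows "rho_XY Sxx Syy * rho_YX Sxx Syy < 1 \<and>
    (\<forall>\<alpha>>0. (\<forall>\<nu>\<in>freqI. (cmod (dtft h \<nu>))\<^sup>2 \<le> (2 - \<alpha>) * l2sq h) \<longrightarrow>
       rho_XY Sxx Syy * rho_YX Sxx Syy
         \<le> 1 / (1 + \<alpha> * (LBINT \<nu>:freqI. (((cmod (dtft h \<nu>))\<^sup>2 - l2sq h) / l2sq h)\<^sup>2))
     \<and> 1 / (1 + \<alpha> * (LBINT \<nu>:freqI. (((cmod (dtft h \<nu>))\<^sup>2 - l2sq h) / l2sq h)\<^sup>2)) < 1)"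
proof -
  define g where "g = (\<lambda>\<nu>. (cmod (dtft h \<nu>))\<^sup>2)"
  have g_cont: "continuous_on UNIV g"
    unfolding g_def by (intro continuous_intros continuous_on_dtft[OF h_bibo])
  have g_pos: "AE \<nu> in lborel. \<nu> \<in> freqI \<longrightarrow> g \<nu> > 0"
    using h_nz by (auto elim!: eventually_mono simp: g_def)
  have g_inv: "set_integrable lborel freqI (\<lambda>\<nu>. 1 / g \<nu>)"
    using h_inv_L1 by (simp add: g_def)
  have nonconst: "\<not> (AE \<nu> in lborel. \<nu> \<in> freqI \<longrightarrow> g \<nu> = avgI g)"
  proof
    assume "AE \<nu> in lborel. \<nu> \<in> freqI \<longrightarrow> g \<nu> = avgI g"
    then have "AE \<nu> in lborel. \<nu> \<in> freqI \<longrightarrow> cmod (dtft h \<nu>) = sqrt (avgI g)"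
      by eventually_elim (auto simp: g_def intro!: real_sqrt_unique[symmetric])
    with h_nonconst show False by blast
  qed
  have "continuous_on UNIV Sxx"
    unfolding Sxx_def psd_def[abs_def] by (intro continuous_intros continuous_on_dtft[OF C_abs])
  then have rho: "rho_XY Sxx Syy * rho_YX Sxx Syy = 1 / (avgI g * avgI (\<lambda>\<nu>. 1 / g \<nu>))"
    using rho_XY_mult_rho_YX_filtered[OF g_cont _ g_pos] Sxx_pos unfolding Sxx_def Syy_def g_def by simp
  have l2: "l2sq h = avgI g"
    unfolding avgI_def g_def by (rule parseval_dtft[OF h_bibo, symmetric])
  define J where "J = avgI (\<lambda>\<nu>. ((g \<nu> - avgI g) / avgI g)\<^sup>2)"
  have deviation: "(LBINT \<nu>:freqI. (((cmod (dtft h \<nu>))\<^sup>2 - l2sq h) / l2sq h)\<^sup>2) = J"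
    unfolding J_def l2 by (simp add: avgI_def g_def)
  define K where "K = avgI g * avgI (\<lambda>\<nu>. 1 / g \<nu>)"
  have "1 < K"
    unfolding K_def by (rule avgI_mult_avgI_inverse_gt_1[OF g_cont g_pos g_inv nonconst])
  moreover have "1 / K \<le> 1 / (1 + \<alpha> * J) \<and> 1 / (1 + \<alpha> * J) < 1"
    if "\<alpha> > 0" and "\<forall>\<nu>\<in>freqI. (cmod (dtft h \<nu>))\<^sup>2 \<le> (2 - \<alpha>) * l2sq h" for \<alpha>
  proof -
    have "1 + \<alpha> * J \<le> K"
      unfolding J_def K_def using that
      by (intro avgI_mult_avgI_inverse_ge[OF g_cont g_pos g_inv]) (auto simp: l2 g_def)
    moreover have "J > 0"
      unfolding J_def by (rule avgI_relative_deviation_pos[OF g_cont g_pos g_inv nonconst])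
    moreover have "1 < 1 + \<alpha> * J"
      using \<open>\<alpha> > 0\<close> \<open>J > 0\<close> by simp
    ultimately show ?thesis
      by (auto intro!: divide_left_mono)
  qed
  ultimately show ?thesis
    unfolding rho deviation K_def[symmetric] by auto
qed

end
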